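(* There exists a constant $C$ (depending on the maximal curvature of $\Gamma$ but independent of the interface location relative to the mesh) such that, for $h$ small enough, every interface element $T$ satisfies $|T_{int}|\le Ch^3$, where $|\cdot|$ denotes area.
   Context: $\mathcal T_h$ is a Cartesian triangular or rectangular mesh of size $h$ of a bounded planar domain containing a curve $\Gamma$ that is $C^2$ inside each interface element (an element whose interior meets $\Gamma$), and which meets the boundary of each interface element $T$ at exactly two points $D,E$ lying on different edges. The set $T_{int}=\bigcup\{l_t\cap T: l_t \text{ is a tangent line to } \Gamma\cap T\}$ is the region of $T$ swept by tangent lines to $\Gamma\cap T$. *)

theory Defs
  imports "HOL-Analysis.Analysis"
begin

definition cross2 :: "real \<times> real \<Rightarrow> real \<times> real \<Rightarrow> real" where
  "cross2 u v = fst u * snd v - snd u * fst v"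

definition sq_corner :: "real \<Rightarrow> int \<Rightarrow> int \<Rightarrow> nat \<Rightarrow> real \<times> real" where
  "sq_corner h i j k =
     (if k mod 4 = 0 then (of_int i * h, of_int j * h)
      else if k mod 4 = 1 then (of_int (i+1) * h, of_int j * h)
      else if k mod 4 = 2 then (of_int (i+1) * h, of_int (j+1) * h)
      else (of_int i * h, of_int (j+1) * h))"

definition rect_element :: "real \<Rightarrow> (real \<times> real) set \<Rightarrow> (real \<times> real) set set \<Rightarrow> bool" where
  "rect_element h T Edges \<longleftrightarrow> (\<exists>i j.
     T = convex hull {sq_corner h i j 0, sq_corner h i j 1, sq_corner h i j 2, sq_corner h i j 3} \<and>
     Edges = {closed_segment (sq_corner h i j 0) (sq_corner h i j 1),
              closed_segment (sq_corner h i j 1) (sq_corner h i j 2),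
              closed_segment (sq_corner h i j 2) (sq_corner h i j 3),
              closed_segment (sq_corner h i j 3) (sq_corner h i j 0)})"

text \<open>T is a triangular element of the Cartesian triangular mesh of size h:
  one of the two halves of a grid square cut along a diagonal.\<close>

definition tri_element :: "real \<Rightarrow> (real \<times> real) set \<Rightarrow> (real \<times> real) set set \<Rightarrow> bool" where
  "tri_element h T Edges \<longleftrightarrow> (\<exists>i j k.
     let p = sq_corner h i j (k+1); q = sq_corner h i j (k+2); r = sq_corner h i j (k+3) in
     T = convex hull {p, q, r} \<and>
     Edges = {closed_segment p q, closed_segment q r, closed_segment r p})"

definition mesh_element :: "real \<Rightarrow> (real \<times> real) set \<Rightarrow> (real \<times> real) set set \<Rightarrow> bool" where
  "mesh_element h T Edges \<longleftrightarrow> rect_element h T Edges \<or> tri_element h T Edges"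

definition interface_arc ::
  "real \<Rightarrow> (real \<Rightarrow> real \<times> real) \<Rightarrow> (real \<Rightarrow> real \<times> real) \<Rightarrow> (real \<Rightarrow> real \<times> real)
   \<Rightarrow> real \<Rightarrow> real \<Rightarrow> (real \<times> real) set \<Rightarrow> (real \<times> real) set set \<Rightarrow> bool" where
  "interface_arc \<kappa> g g1 g2 a b T Edges \<longleftrightarrow>
     a < b \<and> inj_on g {a..b} \<and>
     (\<forall>t\<in>{a..b}. (g has_vector_derivative g1 t) (at t within {a..b})) \<and>
     (\<forall>t\<in>{a..b}. (g1 has_vector_derivative g2 t) (at t within {a..b})) \<and>
     continuous_on {a..b} g2 \<and>
     (\<forall>t\<in>{a..b}. g1 t \<noteq> 0) \<and>
     (\<forall>t\<in>{a..b}. \<bar>cross2 (g1 t) (g2 t)\<bar> / norm (g1 t) ^ 3 \<le> \<kappa>) \<and>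
     g ` {a<..<b} \<subseteq> interior T \<and>
     g a \<in> frontier T \<and> g b \<in> frontier T \<and>
     \<not> (\<exists>e\<in>Edges. g a \<in> e \<and> g b \<in> e)"

text \<open>T_int: the part of T swept by the tangent lines to gamma([a,b]).\<close>

definition tangent_region ::
  "(real \<Rightarrow> real \<times> real) \<Rightarrow> (real \<Rightarrow> real \<times> real) \<Rightarrow> real \<Rightarrow> real \<Rightarrow> (real \<times> real) set
   \<Rightarrow> (real \<times> real) set" where
  "tangent_region g g1 a b T = (\<Union>t\<in>{a..b}. {g t + s *\<^sub>R g1 t | s. True} \<inter> T)"

end

theory Submission
  imports Defs
begin

text \<open>Let \<open>e\<close> be the unit tangent of the arc at its starting point and \<open>\<theta>(t)\<close> the angle by
  which the tangent has turned at parameter \<open>t\<close>. As long as \<open>cos \<theta> \<ge> 3/4\<close>, arclength is at most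
  \<open>4/3\<close> times the progress along \<open>e\<close>, which is at most \<open>2h\<close> inside a cell; since
  \<open>|d(sin \<theta>)/ds| \<le> \<kappa>\<close>, this gives \<open>|sin \<theta>| \<le> 8\<kappa>h/3 \<le> 1/3\<close>, so by continuity \<open>cos \<theta>\<close> never
  drops to \<open>3/4\<close>. Hence the arc stays within \<open>O(\<kappa>h\<^sup>2)\<close> of the line through its starting point
  in direction \<open>e\<close>, and so does every tangent segment inside the cell (its length is \<open>O(h)\<close> and
  its direction deviates from \<open>e\<close> by \<open>O(\<kappa>h)\<close>). The tangent region thus lies in a strip of width
  \<open>O(\<kappa>h\<^sup>2)\<close> across a square of side \<open>h\<close>, whose area is \<open>O(\<kappa>h\<^sup>3)\<close>.\<close>

lemma emeasure_le_of_subset_slab: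
  fixes n w A c :: real
  assumes n: "\<bar>n\<bar> \<ge> 1/2" and w: "w \<ge> 0" and B: "B \<subseteq> {y. \<bar>A + (y - c) * n\<bar> \<le> w}"
  shows "emeasure lborel B \<le> ennreal (4 * w)"
proof -
  have "B \<subseteq> {c - A/n - 2*w .. c - A/n + 2*w}"
  proof
    fix y assume "y \<in> B"
    then have y: "\<bar>A + (y - c) * n\<bar> \<le> w" using B by blast
    have "A + (y - c) * n = (y - (c - A/n)) * n"
      using n by (simp add: field_simps)
    with y have "\<bar>y - (c - A/n)\<bar> * \<bar>n\<bar> \<le> w"
      by (simp only: abs_mult)
    also have "w \<le> 2 * w * \<bar>n\<bar>"
      using mult_left_mono[OF n, of "2 * w"] w by simp
    finally have "\<bar>y - (c - A/n)\<bar> \<le> 2 * w"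
      using n by (simp add: mult_le_cancel_right)
    then show "y \<in> {c - A/n - 2*w .. c - A/n + 2*w}" by auto
  qed
  then have "emeasure lborel B \<le> emeasure lborel {c - A/n - 2*w .. c - A/n + 2*w}"
    by (rule emeasure_mono) simp
  then show ?thesis
    using w by simp
qed

lemma emeasure_le_by_vertical_sections:
  fixes S :: "(real \<times> real) set"
  assumes S: "S \<in> sets borel" and "m \<ge> 0" "l \<ge> 0"
    and sections: "\<And>x. emeasure lborel (Pair x -` S) \<le> ennreal m * indicator {x0..x0+l} x"
  shows "emeasure lborel S \<le> ennreal (m * l)"
proof -
  have S': "S \<in> sets (lborel \<Otimes>\<^sub>M lborel)"
    using S by (simp only: lborel_prod sets_lborel)
  have "emeasure lborel S = emeasure (lborel \<Otimes>\<^sub>M lborel) S"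
    by (simp only: lborel_prod)
  also have "\<dots> = (\<integral>\<^sup>+x. emeasure lborel (Pair x -` S) \<partial>lborel)"
    by (rule lborel.emeasure_pair_measure_alt[OF S'])
  also have "\<dots> \<le> (\<integral>\<^sup>+x. ennreal m * indicator {x0..x0+l} x \<partial>lborel)"
    by (intro nn_integral_mono sections)
  also have "\<dots> = ennreal (m * l)"
    using assms by (simp add: nn_integral_cmult_indicator ennreal_mult)
  finally show ?thesis .
qed

lemma emeasure_le_by_horizontal_sections:
  fixes S :: "(real \<times> real) set"
  assumes S: "S \<in> sets borel" and "m \<ge> 0" "l \<ge> 0"
    and sections: "\<And>y. emeasure lborel ((\<lambda>x. (x, y)) -` S) \<le> ennreal m * indicator {y0..y0+l} y"
  shows "emeasure lborel S \<le> ennreal (m * l)"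
proof -
  have S': "S \<in> sets (lborel \<Otimes>\<^sub>M lborel)"
    using S by (simp only: lborel_prod sets_lborel)
  have "emeasure lborel S = emeasure (lborel \<Otimes>\<^sub>M lborel) S"
    by (simp only: lborel_prod)
  also have "\<dots> = (\<integral>\<^sup>+y. emeasure lborel ((\<lambda>x. (x, y)) -` S) \<partial>lborel)"
    by (rule lborel_pair.emeasure_pair_measure_alt2[OF S'])
  also have "\<dots> \<le> (\<integral>\<^sup>+y. ennreal m * indicator {y0..y0+l} y \<partial>lborel)"
    by (intro nn_integral_mono sections)
  also have "\<dots> = ennreal (m * l)"
    using assms by (simp add: nn_integral_cmult_indicator ennreal_mult)
  finally show ?thesis .
qed

lemma measure_square_inter_strip_le:
  fixes n1 n2 c1 c2 w x0 y0 h :: real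
  assumes n: "n1^2 + n2^2 = 1" and w: "w \<ge> 0" and h: "h \<ge> 0"
  shows "measure lebesgue {p \<in> cbox (x0,y0) (x0+h,y0+h).
           \<bar>(fst p - c1) * n1 + (snd p - c2) * n2\<bar> \<le> w} \<le> 4 * w * h"
proof -
  \<comment> \<open>Slice along the axis more transversal to the strip: each section then has length at most \<open>4w\<close>.\<close>
  define S where "S = {p \<in> cbox (x0,y0) (x0+h,y0+h). \<bar>(fst p - c1) * n1 + (snd p - c2) * n2\<bar> \<le> w}"
  have "S = cbox (x0,y0) (x0+h,y0+h) \<inter> {p. \<bar>(fst p - c1) * n1 + (snd p - c2) * n2\<bar> \<le> w}"
    by (auto simp: S_def)
  moreover have "closed {p :: real \<times> real. \<bar>(fst p - c1) * n1 + (snd p - c2) * n2\<bar> \<le> w}"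
    by (intro closed_Collect_le continuous_intros)
  ultimately have S_borel: "S \<in> sets borel"
    by (simp add: borel_compact compact_Int_closed)
  have "emeasure lborel S \<le> ennreal (4 * w * h)"
  proof (cases "\<bar>n2\<bar> \<ge> 1/2")
    case True
    show ?thesis
    proof (rule emeasure_le_by_vertical_sections[OF S_borel _ h])
      fix x
      have "emeasure lborel (Pair x -` S) \<le> ennreal (4 * w)"
        by (rule emeasure_le_of_subset_slab[OF True w]) (auto simp: S_def)
      moreover have "x \<notin> {x0..x0+h} \<Longrightarrow> Pair x -` S = {}"
        by (auto simp: S_def)
      ultimately show "emeasure lborel (Pair x -` S) \<le> ennreal (4 * w) * indicator {x0..x0+h} x"
        by (cases "x \<in> {x0..x0+h}") auto
    qed (use w in simp)
  next
    case False
    have "(1/2)^2 \<le> n1^2"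
      using n False power_strict_mono[of "\<bar>n2\<bar>" "1/2" 2] by (simp add: power2_eq_square)
    then have n1: "\<bar>n1\<bar> \<ge> 1/2"
      by (simp add: abs_le_square_iff[symmetric])
    show ?thesis
    proof (rule emeasure_le_by_horizontal_sections[OF S_borel _ h])
      fix y
      have "emeasure lborel ((\<lambda>x. (x, y)) -` S) \<le> ennreal (4 * w)"
        by (rule emeasure_le_of_subset_slab[OF n1 w, where A = "(y - c2) * n2" and c = c1])
          (auto simp: S_def add.commute)
      moreover have "y \<notin> {y0..y0+h} \<Longrightarrow> (\<lambda>x. (x, y)) -` S = {}"
        by (auto simp: S_def)
      ultimately show "emeasure lborel ((\<lambda>x. (x, y)) -` S) \<le> ennreal (4 * w) * indicator {y0..y0+h} y"
        by (cases "y \<in> {y0..y0+h}") auto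
    qed (use w in simp)
  qed
  then have "measure lborel S \<le> 4 * w * h"
    unfolding measure_def using w h by (intro enn2real_leI) auto
  then show ?thesis
    using S_borel by (simp add: S_def)
qed

lemma abs_diff_le_of_dominated_derivative:
  fixes f \<phi> \<phi>' :: "real \<Rightarrow> real"
  assumes "a \<le> t" and "continuous_on {a..t} f" "continuous_on {a..t} \<phi>"
    and f': "\<And>x. a < x \<Longrightarrow> x < t \<Longrightarrow> \<exists>D. (f has_real_derivative D) (at x) \<and> \<bar>D\<bar> \<le> \<phi>' x"
    and \<phi>': "\<And>x. a < x \<Longrightarrow> x < t \<Longrightarrow> (\<phi> has_real_derivative \<phi>' x) (at x)"
  shows "\<bar>f t - f a\<bar> \<le> \<phi> t - \<phi> a"
proof -
  have "(\<lambda>x. \<phi> x - f x) a \<le> (\<lambda>x. \<phi> x - f x) t"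
  proof (rule DERIV_nonneg_imp_increasing_open[OF \<open>a \<le> t\<close>])
    fix x assume x: "a < x" "x < t"
    then obtain D where "(f has_real_derivative D) (at x)" "\<bar>D\<bar> \<le> \<phi>' x"
      using f' by blast
    then show "\<exists>y. ((\<lambda>x. \<phi> x - f x) has_real_derivative y) (at x) \<and> 0 \<le> y"
      using DERIV_diff[OF \<phi>'[OF x]] by force
  qed (use assms in \<open>intro continuous_intros\<close>)
  moreover have "(\<lambda>x. \<phi> x + f x) a \<le> (\<lambda>x. \<phi> x + f x) t"
  proof (rule DERIV_nonneg_imp_increasing_open[OF \<open>a \<le> t\<close>])
    fix x assume x: "a < x" "x < t"
    then obtain D where "(f has_real_derivative D) (at x)" "\<bar>D\<bar> \<le> \<phi>' x"
      using f' by blast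
    then show "\<exists>y. ((\<lambda>x. \<phi> x + f x) has_real_derivative y) (at x) \<and> 0 \<le> y"
      using DERIV_add[OF \<phi>'[OF x]] by force
  qed (use assms in \<open>intro continuous_intros\<close>)
  ultimately show ?thesis by auto
qed

lemma DERIV_direction_projection:
  fixes X1 Y1 :: "real \<Rightarrow> real"
  assumes dX1: "(X1 has_real_derivative A) (at t)" and dY1: "(Y1 has_real_derivative B) (at t)"
    and nonzero: "X1 t^2 + Y1 t^2 > 0"
  shows "((\<lambda>t. (X1 t * n1 + Y1 t * n2) / sqrt (X1 t^2 + Y1 t^2)) has_real_derivative
     (X1 t * B - Y1 t * A) * (n2 * X1 t - n1 * Y1 t) / ((X1 t^2 + Y1 t^2) * sqrt (X1 t^2 + Y1 t^2))) (at t)"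
proof -
  define M where "M = X1 t^2 + Y1 t^2"
  define r where "r = sqrt M"
  have r: "r > 0" "r * r = M"
    using nonzero by (simp_all add: r_def M_def)
  have dN: "((\<lambda>t. X1 t * n1 + Y1 t * n2) has_real_derivative A * n1 + B * n2) (at t)"
    by (rule derivative_eq_intros dX1 dY1 refl | simp)+
  have dM: "((\<lambda>t. X1 t^2 + Y1 t^2) has_real_derivative 2 * X1 t * A + 2 * Y1 t * B) (at t)"
    by (rule derivative_eq_intros dX1 dY1 refl | simp)+
  have dr: "((\<lambda>t. sqrt (X1 t^2 + Y1 t^2)) has_real_derivative
      inverse r / 2 * (2 * X1 t * A + 2 * Y1 t * B)) (at t)"
    unfolding r_def M_def by (rule DERIV_chain2[OF DERIV_real_sqrt[OF nonzero] dM])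
  have "((\<lambda>t. (X1 t * n1 + Y1 t * n2) / sqrt (X1 t^2 + Y1 t^2)) has_real_derivative
      ((A * n1 + B * n2) * r - (X1 t * n1 + Y1 t * n2) * (inverse r / 2 * (2 * X1 t * A + 2 * Y1 t * B)))
        / (r * r)) (at t)"
    unfolding r_def M_def
    by (rule DERIV_divide[OF dN dr[unfolded r_def M_def]]) (use nonzero in auto)
  moreover have "((A * n1 + B * n2) * r - (X1 t * n1 + Y1 t * n2) * (inverse r / 2 * (2 * X1 t * A + 2 * Y1 t * B)))
        / (r * r) = ((A * n1 + B * n2) * (r * r) - (X1 t * n1 + Y1 t * n2) * (X1 t * A + Y1 t * B))
        / ((r * r) * r)"
    using r(1) by (simp add: field_simps)
  moreover have "(A * n1 + B * n2) * M - (X1 t * n1 + Y1 t * n2) * (X1 t * A + Y1 t * B)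
      = (X1 t * B - Y1 t * A) * (n2 * X1 t - n1 * Y1 t)"
    by (simp add: M_def algebra_simps power2_eq_square)
  ultimately have "((\<lambda>t. (X1 t * n1 + Y1 t * n2) / sqrt (X1 t^2 + Y1 t^2)) has_real_derivative
      (X1 t * B - Y1 t * A) * (n2 * X1 t - n1 * Y1 t) / (M * r)) (at t)"
    unfolding r(2) by simp
  then show ?thesis
    by (simp only: M_def r_def)
qed

lemma has_real_derivative_fst:
  "(g has_vector_derivative v) F \<Longrightarrow> ((\<lambda>t. fst (g t)) has_real_derivative fst v) F"
  by (simp add: has_real_derivative_iff_has_vector_derivative bounded_linear.has_vector_derivative[OF bounded_linear_fst])

lemma has_real_derivative_snd:
  "(g has_vector_derivative v) F \<Longrightarrow> ((\<lambda>t. snd (g t)) has_real_derivative snd v) F"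
  by (simp add: has_real_derivative_iff_has_vector_derivative bounded_linear.has_vector_derivative[OF bounded_linear_snd])

lemma abs_projection_diff_le_in_square:
  fixes u v :: "real \<times> real" and n1 n2 :: real
  assumes "u \<in> cbox (x0,y0) (x0+h,y0+h)" "v \<in> cbox (x0,y0) (x0+h,y0+h)" "\<bar>n1\<bar> \<le> 1" "\<bar>n2\<bar> \<le> 1"
  shows "\<bar>(fst u - fst v) * n1 + (snd u - snd v) * n2\<bar> \<le> 2 * h"
proof -
  have "(fst u, snd u) \<in> cbox (x0,y0) (x0+h,y0+h)" "(fst v, snd v) \<in> cbox (x0,y0) (x0+h,y0+h)"
    using assms(1,2) by simp_all
  then have "\<bar>fst u - fst v\<bar> \<le> h" "\<bar>snd u - snd v\<bar> \<le> h"
    unfolding cbox_Pair_iff by auto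
  then have "\<bar>(fst u - fst v) * n1\<bar> \<le> h * 1" "\<bar>(snd u - snd v) * n2\<bar> \<le> h * 1"
    unfolding abs_mult using assms(3,4) by (intro mult_mono; simp)+
  then show ?thesis by linarith
qed

lemma compact_tangent_region:
  fixes g g1 :: "real \<Rightarrow> real \<times> real"
  assumes g: "continuous_on {a..b} g" and g1: "continuous_on {a..b} g1" and T: "compact T"
    and bounded: "\<And>t r. t \<in> {a..b} \<Longrightarrow> g t + r *\<^sub>R g1 t \<in> T \<Longrightarrow> \<bar>r\<bar> \<le> R"
  shows "compact (tangent_region g g1 a b T)"
proof -
  define F where "F = (\<lambda>p. g (fst p) + snd p *\<^sub>R g1 (fst p))"
  define K where "K = ({a..b} \<times> {-R..R}) \<inter> F -` T"
  have F: "continuous_on ({a..b} \<times> {-R..R}) F"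
    unfolding F_def using g g1
    by (intro continuous_intros continuous_on_compose2[of "{a..b}" _ _ fst]) auto
  have "closed K"
    unfolding K_def using F T by (intro continuous_closed_preimage closed_Times compact_imp_closed) auto
  then have "compact (({a..b} \<times> {-R..R}) \<inter> K)"
    by (intro compact_Int_closed compact_Times compact_Icc)
  moreover have "({a..b} \<times> {-R..R}) \<inter> K = K" by (auto simp: K_def)
  ultimately have "compact K" by simp
  moreover have "tangent_region g g1 a b T = F ` K"
  proof
    show "tangent_region g g1 a b T \<subseteq> F ` K"
    proof
      fix p assume "p \<in> tangent_region g g1 a b T"
      then obtain t r where "t \<in> {a..b}" "p = g t + r *\<^sub>R g1 t" "p \<in> T"
        unfolding tangent_region_def by blast
      then have "(t, r) \<in> K" "p = F (t, r)"
        using bounded[of t r] by (auto simp: K_def F_def abs_le_iff)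
      then show "p \<in> F ` K" by blast
    qed
    show "F ` K \<subseteq> tangent_region g g1 a b T"
    proof
      fix p assume "p \<in> F ` K"
      then obtain q where "q \<in> K" "p = F q" by blast
      then have "fst q \<in> {a..b}" "p = g (fst q) + snd q *\<^sub>R g1 (fst q)" "p \<in> T"
        by (auto simp: K_def F_def)
      then show "p \<in> tangent_region g g1 a b T"
        unfolding tangent_region_def by blast
    qed
  qed
  ultimately show ?thesis
    using F by (auto simp: K_def intro: compact_continuous_image continuous_on_subset)
qed

locale curvature_bounded_arc_in_square =
  fixes g g1 g2 :: "real \<Rightarrow> real \<times> real" and a b \<kappa> h x0 y0 :: real
  assumes a_less_b: "a < b"
    and g_deriv: "\<And>t. t \<in> {a..b} \<Longrightarrow> (g has_vector_derivative g1 t) (at t within {a..b})"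
    and g1_deriv: "\<And>t. t \<in> {a..b} \<Longrightarrow> (g1 has_vector_derivative g2 t) (at t within {a..b})"
    and g1_nonzero: "\<And>t. t \<in> {a..b} \<Longrightarrow> g1 t \<noteq> 0"
    and curvature_le: "\<And>t. t \<in> {a..b} \<Longrightarrow> \<bar>cross2 (g1 t) (g2 t)\<bar> / norm (g1 t) ^ 3 \<le> \<kappa>"
    and arc_in_square: "\<And>t. t \<in> {a..b} \<Longrightarrow> g t \<in> cbox (x0, y0) (x0 + h, y0 + h)"
    and kappa_nonneg: "\<kappa> \<ge> 0" and h_pos: "h > 0" and small_mesh: "8 * \<kappa> * h \<le> 1"
begin

definition speed :: "real \<Rightarrow> real" where
  "speed t = norm (g1 t)"

definition e1 :: real where
  "e1 = fst (g1 a) / speed a"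

definition e2 :: real where
  "e2 = snd (g1 a) / speed a"

definition turn_cos :: "real \<Rightarrow> real" where
  "turn_cos t = (fst (g1 t) * e1 + snd (g1 t) * e2) / speed t"

definition turn_sin :: "real \<Rightarrow> real" where
  "turn_sin t = (fst (g1 t) * (- e2) + snd (g1 t) * e1) / speed t"

definition tangential_offset :: "real \<Rightarrow> real" where
  "tangential_offset t = (fst (g t) - fst (g a)) * e1 + (snd (g t) - snd (g a)) * e2"

definition normal_offset :: "real \<Rightarrow> real" where
  "normal_offset t = (fst (g t) - fst (g a)) * (- e2) + (snd (g t) - snd (g a)) * e1"

lemma a_in_interval: "a \<in> {a..b}"
  using a_less_b by simp

lemma speed_eq: "speed t = sqrt (fst (g1 t)^2 + snd (g1 t)^2)"
  by (simp add: speed_def norm_prod_def)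

lemma speed_sq: "speed t ^ 2 = fst (g1 t)^2 + snd (g1 t)^2"
  by (simp add: speed_eq)

lemma speed_pos: "t \<in> {a..b} \<Longrightarrow> speed t > 0"
  using g1_nonzero by (simp add: speed_def)

lemma continuous_on_g: "continuous_on {a..b} g"
  using g_deriv by (rule continuous_on_vector_derivative)

lemma continuous_on_g1: "continuous_on {a..b} g1"
  using g1_deriv by (rule continuous_on_vector_derivative)

lemma interior_derivatives:
  assumes "a < t" "t < b"
  shows "(g has_vector_derivative g1 t) (at t)" "(g1 has_vector_derivative g2 t) (at t)"
  using g_deriv[of t] g1_deriv[of t] assms by (simp_all add: at_within_Icc_at)

lemma unit_direction: "e1^2 + e2^2 = 1"
proof -
  have "e1^2 + e2^2 = (fst (g1 a)^2 + snd (g1 a)^2) / speed a ^ 2"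
    by (simp add: e1_def e2_def power_divide add_divide_distrib)
  also have "\<dots> = 1"
    using speed_pos[OF a_in_interval] by (simp add: speed_sq[symmetric])
  finally show ?thesis .
qed

lemma abs_e1_le: "\<bar>e1\<bar> \<le> 1" and abs_e2_le: "\<bar>e2\<bar> \<le> 1"
proof -
  have "e1^2 \<le> 1" "e2^2 \<le> 1"
    using unit_direction zero_le_power2[of e1] zero_le_power2[of e2] by linarith+
  then show "\<bar>e1\<bar> \<le> 1" "\<bar>e2\<bar> \<le> 1"
    by (simp_all add: abs_square_le_1)
qed

lemma turn_cos_sq_add_turn_sin_sq:
  assumes "t \<in> {a..b}"
  shows "turn_cos t^2 + turn_sin t^2 = 1"
proof -
  have "turn_cos t^2 + turn_sin t^2
      = (fst (g1 t)^2 + snd (g1 t)^2) * (e1^2 + e2^2) / speed t ^ 2"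
    by (simp add: turn_cos_def turn_sin_def power_divide add_divide_distrib[symmetric])
       (simp add: algebra_simps power2_eq_square)
  then show ?thesis
    using speed_pos[OF assms] by (simp add: unit_direction speed_sq[symmetric])
qed

lemma turn_cos_a: "turn_cos a = 1"
proof -
  have "turn_cos a = (fst (g1 a)^2 + snd (g1 a)^2) / speed a ^ 2"
    by (simp add: turn_cos_def e1_def e2_def power2_eq_square add_divide_distrib)
  then show ?thesis
    using speed_pos[OF a_in_interval] by (simp add: speed_sq[symmetric])
qed

lemma turn_sin_a: "turn_sin a = 0"
  by (simp add: turn_sin_def e1_def e2_def field_simps)

lemma tangential_offset_a: "tangential_offset a = 0"
  by (simp add: tangential_offset_def)

lemma normal_offset_a: "normal_offset a = 0"
  by (simp add: normal_offset_def)

lemma abs_tangential_offset_le: "t \<in> {a..b} \<Longrightarrow> \<bar>tangential_offset t\<bar> \<le> 2 * h"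
  unfolding tangential_offset_def
  by (intro abs_projection_diff_le_in_square[of _ x0 y0] arc_in_square a_in_interval abs_e1_le abs_e2_le)

lemma continuous_on_tangential_offset: "continuous_on {a..b} tangential_offset"
  unfolding tangential_offset_def using continuous_on_g by (intro continuous_intros)

lemma continuous_on_normal_offset: "continuous_on {a..b} normal_offset"
  unfolding normal_offset_def using continuous_on_g by (intro continuous_intros)

lemma continuous_on_turn_cos: "continuous_on {a..b} turn_cos"
  unfolding turn_cos_def speed_def using continuous_on_g1 g1_nonzero
  by (intro continuous_intros) auto

lemma continuous_on_turn_sin: "continuous_on {a..b} turn_sin"
  unfolding turn_sin_def speed_def using continuous_on_g1 g1_nonzero
  by (intro continuous_intros) auto

lemma tangential_offset_deriv:
  assumes "a < t" "t < b"
  shows "(tangential_offset has_real_derivative turn_cos t * speed t) (at t)"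
proof -
  note d = has_real_derivative_fst[OF interior_derivatives(1)[OF assms]]
    has_real_derivative_snd[OF interior_derivatives(1)[OF assms]]
  have "(tangential_offset has_real_derivative fst (g1 t) * e1 + snd (g1 t) * e2) (at t)"
    unfolding tangential_offset_def by (rule derivative_eq_intros d refl | simp)+
  then show ?thesis
    using speed_pos[of t] assms by (simp add: turn_cos_def)
qed

lemma normal_offset_deriv:
  assumes "a < t" "t < b"
  shows "(normal_offset has_real_derivative turn_sin t * speed t) (at t)"
proof -
  note d = has_real_derivative_fst[OF interior_derivatives(1)[OF assms]]
    has_real_derivative_snd[OF interior_derivatives(1)[OF assms]]
  have "(normal_offset has_real_derivative fst (g1 t) * (- e2) + snd (g1 t) * e1) (at t)"
    unfolding normal_offset_def by (rule derivative_eq_intros d refl | simp)+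
  then show ?thesis
    using speed_pos[of t] assms by (simp add: turn_sin_def)
qed

lemma turn_sin_deriv_bounded:
  assumes "a < t" "t < b"
  shows "\<exists>D. (turn_sin has_real_derivative D) (at t) \<and> \<bar>D\<bar> \<le> \<kappa> * speed t"
proof -
  have t: "t \<in> {a..b}" using assms by simp
  define x1 where "x1 = fst (g1 t)"
  define y1 where "y1 = snd (g1 t)"
  define x2 where "x2 = fst (g2 t)"
  define y2 where "y2 = snd (g2 t)"
  define D where "D = (x1 * y2 - y1 * x2) * (e1 * x1 - (- e2) * y1) / ((x1^2 + y1^2) * sqrt (x1^2 + y1^2))"
  have "(turn_sin has_real_derivative D) (at t)"
    unfolding turn_sin_def speed_eq D_def x1_def y1_def x2_def y2_def
    using speed_pos[OF t]
    by (intro DERIV_direction_projection has_real_derivative_fst has_real_derivative_snd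
        interior_derivatives(2)[OF assms]) (simp add: speed_sq[symmetric])
  moreover have "\<bar>D\<bar> \<le> \<kappa> * speed t"
  proof -
    have pos: "speed t > 0" using speed_pos[OF t] .
    have sq: "x1^2 + y1^2 = speed t ^ 2" by (simp add: speed_sq x1_def y1_def)
    have sp: "sqrt (x1^2 + y1^2) = speed t" by (simp add: speed_eq x1_def y1_def)
    have "\<bar>x1 * y2 - y1 * x2\<bar> / speed t ^ 3 \<le> \<kappa>"
      using curvature_le[OF t] unfolding cross2_def speed_def x1_def y1_def x2_def y2_def .
    then have curv: "\<bar>x1 * y2 - y1 * x2\<bar> \<le> \<kappa> * speed t ^ 3"
      using pos by (simp add: divide_le_eq)
    have "(e1 * x1 - (- e2) * y1)^2 \<le> (e1^2 + e2^2) * (x1^2 + y1^2)"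
      using zero_le_power2[of "e1 * y1 - e2 * x1"] by (simp add: algebra_simps power2_eq_square)
    then have "(e1 * x1 - (- e2) * y1)^2 \<le> speed t ^ 2"
      by (simp only: unit_direction sq mult_1_left)
    then have proj: "\<bar>e1 * x1 - (- e2) * y1\<bar> \<le> speed t"
      using pos abs_le_square_iff[of _ "speed t"] by simp
    have "\<bar>(x1 * y2 - y1 * x2) * (e1 * x1 - (- e2) * y1)\<bar> \<le> (\<kappa> * speed t ^ 3) * speed t"
      unfolding abs_mult by (rule mult_mono[OF curv proj]) (use kappa_nonneg pos in auto)
    moreover have "(x1^2 + y1^2) * sqrt (x1^2 + y1^2) = speed t ^ 3"
      using pos unfolding sp sq by (simp add: power3_eq_cube power2_eq_square)
    ultimately show ?thesis
      unfolding D_def abs_divide using pos by (simp add: divide_le_eq mult_ac)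
  qed
  ultimately show ?thesis by blast
qed

text \<open>Within the cone \<open>turn_cos \<ge> 3/4\<close>, arclength is at most \<open>4/3\<close> of the tangential offset,
  which the cell bounds by \<open>2h\<close>.\<close>

lemma abs_le_by_arclength_rate:
  assumes t1: "t1 \<in> {a..b}" and "f a = 0" "m \<ge> 0" and "continuous_on {a..t1} f"
    and rate: "\<And>x. a < x \<Longrightarrow> x < t1 \<Longrightarrow>
      \<exists>D. (f has_real_derivative D) (at x) \<and> \<bar>D\<bar> \<le> m * speed x"
    and cone: "\<And>x. a < x \<Longrightarrow> x < t1 \<Longrightarrow> turn_cos x \<ge> 3/4"
  shows "\<bar>f t1\<bar> \<le> 8/3 * m * h"
proof -
  have sub: "{a..t1} \<subseteq> {a..b}" using t1 by auto
  have "\<bar>f t1 - f a\<bar> \<le> 4/3 * m * tangential_offset t1 - 4/3 * m * tangential_offset a"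
  proof (rule abs_diff_le_of_dominated_derivative)
    show "continuous_on {a..t1} (\<lambda>t. 4/3 * m * tangential_offset t)"
      using continuous_on_subset[OF continuous_on_tangential_offset sub] by (intro continuous_intros)
    fix x assume x: "a < x" "x < t1"
    then have x': "a < x" "x < b" using t1 by auto
    show "((\<lambda>t. 4/3 * m * tangential_offset t) has_real_derivative
        4/3 * m * (turn_cos x * speed x)) (at x)"
      by (intro DERIV_cmult tangential_offset_deriv x')
    have "m * speed x * 1 \<le> m * speed x * (4/3 * turn_cos x)"
      using cone[OF x] \<open>m \<ge> 0\<close> speed_pos[of x] x' by (intro mult_left_mono) auto
    then show "\<exists>D. (f has_real_derivative D) (at x) \<and> \<bar>D\<bar> \<le> 4/3 * m * (turn_cos x * speed x)"
      using rate[OF x] by (force simp: mult_ac)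
  qed (use t1 assms in auto)
  also have "\<dots> = 4/3 * m * tangential_offset t1"
    by (simp add: tangential_offset_a)
  also have "\<dots> \<le> 4/3 * m * (2 * h)"
    using abs_tangential_offset_le[OF t1] \<open>m \<ge> 0\<close> by (intro mult_left_mono) auto
  finally show ?thesis
    using \<open>f a = 0\<close> by simp
qed

lemma turn_cos_gt: "t \<in> {a..b} \<Longrightarrow> turn_cos t > 3/4"
proof (rule ccontr)
  \<comment> \<open>At the first parameter where \<open>turn_cos = 3/4\<close>, \<open>turn_sin\<^sup>2 = 7/16\<close>, contradicting \<open>|turn_sin| \<le> 1/3\<close>.\<close>
  fix t2 assume t2: "t2 \<in> {a..b}" and "\<not> turn_cos t2 > 3/4"
  define Z where "Z = {t \<in> {a..b}. turn_cos t = 3/4}"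
  have hit: "\<exists>z\<in>Z. z \<le> x" if "x \<in> {a..b}" "turn_cos x \<le> 3/4" for x
  proof -
    have "\<exists>z\<ge>a. z \<le> x \<and> turn_cos z = 3/4"
      using that turn_cos_a continuous_on_subset[OF continuous_on_turn_cos, of "{a..x}"]
      by (intro IVT2') auto
    then show ?thesis using that by (auto simp: Z_def)
  qed
  have "Z \<noteq> {}" using hit[OF t2] \<open>\<not> turn_cos t2 > 3/4\<close> by auto
  moreover have Z_bdd: "bdd_below Z" by (auto simp: Z_def bdd_below_def)
  moreover have "closed Z"
    unfolding Z_def by (rule continuous_closed_preimage_constant[OF continuous_on_turn_cos]) simp
  ultimately have "Inf Z \<in> Z" by (rule closed_contains_Inf)
  then have t1: "Inf Z \<in> {a..b}" and cos_t1: "turn_cos (Inf Z) = 3/4" by (auto simp: Z_def)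
  have "\<bar>turn_sin (Inf Z)\<bar> \<le> 8/3 * \<kappa> * h"
  proof (rule abs_le_by_arclength_rate[where f = turn_sin, OF t1 turn_sin_a kappa_nonneg])
    show "continuous_on {a..Inf Z} turn_sin"
      using t1 by (auto intro: continuous_on_subset[OF continuous_on_turn_sin])
    fix x assume x: "a < x" "x < Inf Z"
    then show "\<exists>D. (turn_sin has_real_derivative D) (at x) \<and> \<bar>D\<bar> \<le> \<kappa> * speed x"
      using t1 by (intro turn_sin_deriv_bounded) auto
    show "turn_cos x \<ge> 3/4"
    proof (rule ccontr)
      assume "\<not> turn_cos x \<ge> 3/4"
      then obtain z where "z \<in> Z" "z \<le> x" using hit[of x] x t1 by auto
      then show False using cInf_lower[OF _ Z_bdd, of z] x by auto
    qed
  qed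
  also have "\<dots> \<le> 1/3" using small_mesh by simp
  finally have "turn_sin (Inf Z)^2 \<le> (1/3)^2"
    by (metis abs_ge_zero power2_abs power_mono)
  moreover have "turn_sin (Inf Z)^2 = 7/16"
    using turn_cos_sq_add_turn_sin_sq[OF t1] cos_t1 by (simp add: power2_eq_square)
  ultimately show False by (simp add: power2_eq_square)
qed

lemma abs_turn_sin_le:
  assumes t: "t \<in> {a..b}"
  shows "\<bar>turn_sin t\<bar> \<le> 8/3 * \<kappa> * h"
proof (rule abs_le_by_arclength_rate[where f = turn_sin, OF t turn_sin_a kappa_nonneg])
  show "continuous_on {a..t} turn_sin"
    using t by (auto intro: continuous_on_subset[OF continuous_on_turn_sin])
  fix x assume x: "a < x" "x < t"
  then show "\<exists>D. (turn_sin has_real_derivative D) (at x) \<and> \<bar>D\<bar> \<le> \<kappa> * speed x"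
    using t by (intro turn_sin_deriv_bounded) auto
  show "turn_cos x \<ge> 3/4"
    using turn_cos_gt[of x] x t by simp
qed

lemma abs_normal_offset_le:
  assumes t: "t \<in> {a..b}"
  shows "\<bar>normal_offset t\<bar> \<le> 64/9 * \<kappa> * h^2"
proof -
  have "\<bar>normal_offset t\<bar> \<le> 8/3 * (8/3 * \<kappa> * h) * h"
  proof (rule abs_le_by_arclength_rate[OF t])
    fix x assume x: "a < x" "x < t"
    then have x': "a < x" "x < b" "x \<in> {a..b}" using t by auto
    have "\<bar>turn_sin x * speed x\<bar> \<le> 8/3 * \<kappa> * h * speed x"
      unfolding abs_mult using abs_turn_sin_le[OF x'(3)] speed_pos[OF x'(3)]
      by (intro mult_mono) auto
    then show "\<exists>D. (normal_offset has_real_derivative D) (at x) \<and> \<bar>D\<bar> \<le> 8/3 * \<kappa> * h * speed x"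
      using normal_offset_deriv[OF x'(1,2)] by blast
    show "turn_cos x \<ge> 3/4" using turn_cos_gt[OF x'(3)] by simp
  qed (use t kappa_nonneg h_pos in \<open>auto simp: normal_offset_a
        intro: continuous_on_subset[OF continuous_on_normal_offset]\<close>)
  then show ?thesis by (simp add: power2_eq_square)
qed

lemma tangent_point_bounds:
  assumes t: "t \<in> {a..b}" and x: "g t + r *\<^sub>R g1 t \<in> cbox (x0, y0) (x0 + h, y0 + h)"
  shows "\<bar>r\<bar> * speed t \<le> 8/3 * h"
    and "\<bar>(fst (g t + r *\<^sub>R g1 t) - fst (g a)) * (- e2) + (snd (g t + r *\<^sub>R g1 t) - snd (g a)) * e1\<bar>
      \<le> 15 * \<kappa> * h^2"
proof -
  let ?x = "g t + r *\<^sub>R g1 t"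
  have "(fst ?x - fst (g t)) * e1 + (snd ?x - snd (g t)) * e2 = r * speed t * turn_cos t"
    using speed_pos[OF t] by (simp add: turn_cos_def field_simps)
  moreover have "\<bar>(fst ?x - fst (g t)) * e1 + (snd ?x - snd (g t)) * e2\<bar> \<le> 2 * h"
    by (rule abs_projection_diff_le_in_square[OF x arc_in_square[OF t] abs_e1_le abs_e2_le])
  ultimately have "\<bar>r\<bar> * speed t * turn_cos t \<le> 2 * h"
    using speed_pos[OF t] turn_cos_gt[OF t] by (simp add: abs_mult)
  moreover have "\<bar>r\<bar> * speed t * (3/4) \<le> \<bar>r\<bar> * speed t * turn_cos t"
    using speed_pos[OF t] turn_cos_gt[OF t] by (intro mult_left_mono) auto
  ultimately show r: "\<bar>r\<bar> * speed t \<le> 8/3 * h" by linarith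
  have "(fst ?x - fst (g a)) * (- e2) + (snd ?x - snd (g a)) * e1
      = normal_offset t + (r * speed t) * turn_sin t"
    using speed_pos[OF t] by (simp add: normal_offset_def turn_sin_def field_simps)
  moreover have "\<bar>(r * speed t) * turn_sin t\<bar> = (\<bar>r\<bar> * speed t) * \<bar>turn_sin t\<bar>"
    using speed_pos[OF t] by (simp add: abs_mult)
  moreover have "\<dots> \<le> (8/3 * h) * (8/3 * \<kappa> * h)"
    using h_pos by (intro mult_mono r abs_turn_sin_le[OF t]) auto
  ultimately have "\<bar>(fst ?x - fst (g a)) * (- e2) + (snd ?x - snd (g a)) * e1\<bar>
      \<le> 64/9 * \<kappa> * h^2 + (8/3 * h) * (8/3 * \<kappa> * h)"
    using abs_normal_offset_le[OF t] by linarith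
  also have "\<dots> \<le> 15 * \<kappa> * h^2"
    using kappa_nonneg by (simp add: power2_eq_square)
  finally show "\<bar>(fst ?x - fst (g a)) * (- e2) + (snd ?x - snd (g a)) * e1\<bar> \<le> 15 * \<kappa> * h^2" .
qed

lemma tangent_region_measure_le:
  assumes T: "compact T" "T \<subseteq> cbox (x0, y0) (x0 + h, y0 + h)"
  shows "tangent_region g g1 a b T \<in> sets lebesgue"
    and "measure lebesgue (tangent_region g g1 a b T) \<le> 60 * \<kappa> * h ^ 3"
proof -
  define strip where "strip = {p \<in> cbox (x0, y0) (x0 + h, y0 + h).
    \<bar>(fst p - fst (g a)) * (- e2) + (snd p - snd (g a)) * e1\<bar> \<le> 15 * \<kappa> * h^2}"
  obtain t0 where t0: "t0 \<in> {a..b}" and min_speed: "\<And>t. t \<in> {a..b} \<Longrightarrow> speed t0 \<le> speed t"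
  proof -
    have "continuous_on {a..b} speed"
      unfolding speed_def using continuous_on_g1 by (intro continuous_intros)
    then show ?thesis
      using continuous_attains_inf[of "{a..b}" speed] a_less_b that by auto
  qed
  have "compact (tangent_region g g1 a b T)"
  proof (rule compact_tangent_region[OF continuous_on_g continuous_on_g1 T(1)])
    fix t r assume t: "t \<in> {a..b}" and "g t + r *\<^sub>R g1 t \<in> T"
    then have "\<bar>r\<bar> * speed t \<le> 8/3 * h" using T(2) by (intro tangent_point_bounds(1)) auto
    moreover have "\<bar>r\<bar> * speed t0 \<le> \<bar>r\<bar> * speed t" using min_speed[OF t] by (simp add: mult_left_mono)
    ultimately show "\<bar>r\<bar> \<le> 8/3 * h / speed t0"
      using speed_pos[OF t0] by (simp add: le_divide_eq)
  qed
  then have region: "tangent_region g g1 a b T \<in> fmeasurable lebesgue"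
    by (rule lmeasurable_compact)
  then show "tangent_region g g1 a b T \<in> sets lebesgue" by (rule fmeasurableD)
  have subset: "tangent_region g g1 a b T \<subseteq> strip"
  proof
    fix p assume "p \<in> tangent_region g g1 a b T"
    then obtain t r where t: "t \<in> {a..b}" and p: "p = g t + r *\<^sub>R g1 t" "p \<in> T"
      unfolding tangent_region_def by blast
    then show "p \<in> strip"
      using T(2) tangent_point_bounds(2)[OF t, of r] by (auto simp: strip_def)
  qed
  have strip_compact: "compact strip"
  proof -
    have "closed {p :: real \<times> real. \<bar>(fst p - fst (g a)) * (- e2) + (snd p - snd (g a)) * e1\<bar> \<le> 15 * \<kappa> * h^2}"
      by (intro closed_Collect_le continuous_intros)
    moreover have "strip = cbox (x0, y0) (x0 + h, y0 + h) \<inter>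
        {p. \<bar>(fst p - fst (g a)) * (- e2) + (snd p - snd (g a)) * e1\<bar> \<le> 15 * \<kappa> * h^2}"
      by (auto simp: strip_def)
    ultimately show ?thesis
      by (simp add: compact_Int_closed)
  qed
  have "measure lebesgue (tangent_region g g1 a b T) \<le> measure lebesgue strip"
    by (rule measure_mono_fmeasurable[OF subset fmeasurableD[OF region] lmeasurable_compact[OF strip_compact]])
  also have "\<dots> \<le> 4 * (15 * \<kappa> * h^2) * h"
    unfolding strip_def
    using unit_direction kappa_nonneg h_pos by (intro measure_square_inter_strip_le) auto
  finally show "measure lebesgue (tangent_region g g1 a b T) \<le> 60 * \<kappa> * h ^ 3"
    by (simp add: power2_eq_square power3_eq_cube)
qed

end

lemma sq_corner_mem_cbox:
  assumes "h > 0"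
  shows "sq_corner h i j k \<in> cbox (of_int i * h, of_int j * h) (of_int i * h + h, of_int j * h + h)"
  using assms by (auto simp: sq_corner_def cbox_interval algebra_simps)

lemma mesh_element_convex_hull_corners:
  assumes "mesh_element h T Edges"
  obtains i j S where "T = convex hull S" "S \<subseteq> range (sq_corner h i j)" "finite S"
proof -
  from assms consider
      i j where "T = convex hull {sq_corner h i j 0, sq_corner h i j 1, sq_corner h i j 2, sq_corner h i j 3}"
    | i j k where "T = convex hull {sq_corner h i j (k+1), sq_corner h i j (k+2), sq_corner h i j (k+3)}"
    unfolding mesh_element_def rect_element_def tri_element_def Let_def by blast
  then show thesis
    by cases (erule that; auto)+
qed

lemma mesh_element_in_square:
  assumes "mesh_element h T Edges" "h > 0"
  shows "\<exists>x0 y0. T \<subseteq> cbox (x0, y0) (x0 + h, y0 + h)"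
proof -
  obtain i j S where T: "T = convex hull S" and S: "S \<subseteq> range (sq_corner h i j)"
    using mesh_element_convex_hull_corners[OF assms(1)] .
  have "T \<subseteq> cbox (of_int i * h, of_int j * h) (of_int i * h + h, of_int j * h + h)"
    unfolding T
  proof (rule hull_minimal)
    show "S \<subseteq> cbox (of_int i * h, of_int j * h) (of_int i * h + h, of_int j * h + h)"
      using S sq_corner_mem_cbox[OF assms(2), of i j] by blast
  qed (rule convex_box)
  then show ?thesis by blast
qed

lemma compact_mesh_element:
  assumes "mesh_element h T Edges"
  shows "compact T"
  by (rule mesh_element_convex_hull_corners[OF assms])
     (simp add: compact_convex_hull finite_imp_compact)

lemma interface_arc_image_subset:
  assumes arc: "interface_arc \<kappa> g g1 g2 a b T Edges" and "closed T"
  shows "g ` {a..b} \<subseteq> T"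
proof -
  have "g ` {a<..<b} \<subseteq> interior T" "g a \<in> frontier T" "g b \<in> frontier T"
    using arc unfolding interface_arc_def by blast+
  then have "g ` {a<..<b} \<subseteq> T" "g a \<in> T" "g b \<in> T"
    using interior_subset frontier_subset_closed[OF \<open>closed T\<close>] by blast+
  moreover have "{a..b} = insert a (insert b {a<..<b})"
    using arc unfolding interface_arc_def by auto
  ultimately show ?thesis by auto
qed

theorem mainTheorem4:
  fixes \<kappa> :: real
  assumes "\<kappa> \<ge> 0"
  shows "\<exists>C h0. C > 0 \<and> h0 > 0 \<and>
    (\<forall>h T Edges g g1 g2 a b.
       0 < h \<and> h < h0 \<and> mesh_element h T Edges \<and> interface_arc \<kappa> g g1 g2 a b T Edges \<longrightarrow>
       tangent_region g g1 a b T \<in> sets lebesgue \<and>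
       measure lebesgue (tangent_region g g1 a b T) \<le> C * h ^ 3)"
proof (intro exI conjI allI impI)
  show "60 * \<kappa> + 1 > 0" and "1 / (8 * (\<kappa> + 1)) > 0"
    using assms by simp_all
  fix h T Edges g g1 g2 a b
  assume "0 < h \<and> h < 1 / (8 * (\<kappa> + 1)) \<and> mesh_element h T Edges \<and> interface_arc \<kappa> g g1 g2 a b T Edges"
  then have h: "0 < h" "h < 1 / (8 * (\<kappa> + 1))" and T: "mesh_element h T Edges"
    and arc: "interface_arc \<kappa> g g1 g2 a b T Edges"
    by simp_all
  have small_mesh: "8 * \<kappa> * h \<le> 1"
    using h assms by (simp add: field_simps)
  obtain x0 y0 where square: "T \<subseteq> cbox (x0, y0) (x0 + h, y0 + h)"
    using mesh_element_in_square[OF T h(1)] by blast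
  have "compact T" using compact_mesh_element[OF T] .
  with arc have "g ` {a..b} \<subseteq> T"
    by (intro interface_arc_image_subset compact_imp_closed)
  with square have arc_in_square: "\<And>t. t \<in> {a..b} \<Longrightarrow> g t \<in> cbox (x0, y0) (x0 + h, y0 + h)"
    by blast
  interpret curvature_bounded_arc_in_square g g1 g2 a b \<kappa> h x0 y0
    by (unfold_locales; use arc arc_in_square assms h(1) small_mesh in \<open>simp add: interface_arc_def\<close>)
  show "tangent_region g g1 a b T \<in> sets lebesgue"
    using tangent_region_measure_le(1)[OF \<open>compact T\<close> square] .
  have "measure lebesgue (tangent_region g g1 a b T) \<le> 60 * \<kappa> * h ^ 3"
    using tangent_region_measure_le(2)[OF \<open>compact T\<close> square] .
  also have "\<dots> \<le> (60 * \<kappa> + 1) * h ^ 3"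
    using h(1) by (simp add: algebra_simps)
  finally show "measure lebesgue (tangent_region g g1 a b T) \<le> (60 * \<kappa> + 1) * h ^ 3" .
qed

end
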